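(* Fix a general instance satisfying the unique-default-action assumption, and a bias $\alpha^\star\in(0,1]$. Let $\tau=\{(p_i,\nu_i)\}_{i=1}^k$ be any Bayes-plausible scheme, i.e. $p_i\ge0$, $\sum_ip_i=1$, $\nu_i\in\Delta(\Omega)$, $\sum_ip_i\nu_i=\mu_0$. For each $i$, let $a_i$ be any maximizer over $A$ of $\sum_\omega\big((1-\alpha^\star)\mu_0(\omega)+\alpha^\star\nu_i(\omega)\big)u_R(\cdot,\omega)$. Then $$\sum_ip_i\sum_\omega\nu_i(\omega)u_R(a_i,\omega)\ \ge\ \sum_\omega\mu_0(\omega)u_R(a_0,\omega).$$
   Context: Finite $\Omega$ and $A$, prior $\mu_0\in\Delta(\Omega)$, receiver utility $u_R:A\times\Omega\to\mathbb R$. The default action $a_0$ is the unique maximizer of $\sum_\omega\mu_0(\omega)u_R(a,\omega)$ over $a\in A$. A receiver with bias $\alpha^\star$ acts optimally with respect to the distorted belief $(1-\alpha^\star)\mu_0+\alpha^\star\nu$. The left-hand side is the receiver's true ex-ante expected utility under $\tau$; the right-hand side is her utility without persuasion. *)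

theory Defs
  imports Complex_Main
begin

definition is_dist :: "('w::finite \<Rightarrow> real) \<Rightarrow> bool" where
  "is_dist \<mu> \<longleftrightarrow> (\<forall>w. \<mu> w \<ge> 0) \<and> (\<Sum>w\<in>UNIV. \<mu> w) = 1"

definition exp_util :: "('a \<Rightarrow> 'w::finite \<Rightarrow> real) \<Rightarrow> ('w \<Rightarrow> real) \<Rightarrow> 'a \<Rightarrow> real" where
  "exp_util u \<mu> a = (\<Sum>w\<in>UNIV. \<mu> w * u a w)"

end

theory Submission
  imports Defs
begin

(* Since a0 is optimal under the prior, an action optimal under the biased belief
   (1 - alpha) mu0 + alpha nu can only match or beat a0 there by doing at least as well
   under nu. So against every posterior the biased receiver's action is at least as good
   as a0, and averaging over the posteriors (Bayes plausibility) turns the value of a0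
   back into its value under the prior. *)

lemma exp_util_lin_comb:
  "exp_util u (\<lambda>w. c * \<mu> w + d * \<nu> w) a = c * exp_util u \<mu> a + d * exp_util u \<nu> a"
  unfolding exp_util_def by (simp add: distrib_right sum.distrib sum_distrib_left mult.assoc)

lemma sum_exp_util:
  "(\<Sum>i\<in>I. p i * exp_util u (\<nu> i) a) = exp_util u (\<lambda>w. \<Sum>i\<in>I. p i * \<nu> i w) a"
  unfolding exp_util_def
  by (simp add: sum_distrib_left sum_distrib_right mult.assoc sum.swap[of _ I])

lemma biased_best_response_ge_default:
  assumes default_opt: "\<And>a. exp_util u \<mu>0 a \<le> exp_util u \<mu>0 a0"
    and "0 < \<alpha>" "\<alpha> \<le> 1"
    and b_opt: "\<And>a. exp_util u (\<lambda>w. (1 - \<alpha>) * \<mu>0 w + \<alpha> * \<nu> w) a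
                  \<le> exp_util u (\<lambda>w. (1 - \<alpha>) * \<mu>0 w + \<alpha> * \<nu> w) b"
  shows "exp_util u \<nu> a0 \<le> exp_util u \<nu> b"
proof -
  have "(1 - \<alpha>) * exp_util u \<mu>0 a0 + \<alpha> * exp_util u \<nu> a0
      \<le> (1 - \<alpha>) * exp_util u \<mu>0 b + \<alpha> * exp_util u \<nu> b"
    using b_opt[of a0] by (simp add: exp_util_lin_comb)
  moreover have "(1 - \<alpha>) * exp_util u \<mu>0 b \<le> (1 - \<alpha>) * exp_util u \<mu>0 a0"
    using default_opt \<open>\<alpha> \<le> 1\<close> by (intro mult_left_mono) auto
  ultimately have "\<alpha> * exp_util u \<nu> a0 \<le> \<alpha> * exp_util u \<nu> b"
    by linarith
  then show ?thesis
    using \<open>0 < \<alpha>\<close> by simp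
qed

theorem propositionE2:
  fixes \<mu>0 :: "'w::finite \<Rightarrow> real"
    and u :: "'a::finite \<Rightarrow> 'w \<Rightarrow> real"
    and a0 :: 'a
    and \<alpha> :: real
    and k :: nat
    and p :: "nat \<Rightarrow> real"
    and \<nu> :: "nat \<Rightarrow> 'w \<Rightarrow> real"
    and act :: "nat \<Rightarrow> 'a"
  assumes prior: "is_dist \<mu>0"
    and default: "\<forall>a. a \<noteq> a0 \<longrightarrow> exp_util u \<mu>0 a < exp_util u \<mu>0 a0"
    and alpha: "0 < \<alpha>" "\<alpha> \<le> 1"
    and p_nonneg: "\<forall>i<k. p i \<ge> 0"
    and p_sum: "(\<Sum>i<k. p i) = 1"
    and nu_dist: "\<forall>i<k. is_dist (\<nu> i)"
    and bayes: "\<forall>w. (\<Sum>i<k. p i * \<nu> i w) = \<mu>0 w"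
    and best: "\<forall>i<k. \<forall>a. exp_util u (\<lambda>w. (1 - \<alpha>) * \<mu>0 w + \<alpha> * \<nu> i w) a
                    \<le> exp_util u (\<lambda>w. (1 - \<alpha>) * \<mu>0 w + \<alpha> * \<nu> i w) (act i)"
  shows "(\<Sum>i<k. p i * exp_util u (\<nu> i) (act i)) \<ge> exp_util u \<mu>0 a0"
proof -
  have default_opt: "exp_util u \<mu>0 a \<le> exp_util u \<mu>0 a0" for a
    using default by (cases "a = a0") (auto intro: less_imp_le)
  have "exp_util u \<mu>0 a0 = (\<Sum>i<k. p i * exp_util u (\<nu> i) a0)"
    using bayes by (simp add: sum_exp_util)
  also have "\<dots> \<le> (\<Sum>i<k. p i * exp_util u (\<nu> i) (act i))"
  proof (rule sum_mono)
    fix i assume "i \<in> {..<k}"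
    then have "exp_util u (\<nu> i) a0 \<le> exp_util u (\<nu> i) (act i)"
      using best alpha by (intro biased_best_response_ge_default[OF default_opt]) auto
    then show "p i * exp_util u (\<nu> i) a0 \<le> p i * exp_util u (\<nu> i) (act i)"
      using p_nonneg \<open>i \<in> {..<k}\<close> by (simp add: mult_left_mono)
  qed
  finally show ?thesis .
qed

end
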